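(* Let $C$ and $Q_1,\dots,Q_k$ ($k\ge0$) be subsets of $\{1,\dots,n\}$, let $W_i\subseteq Q_i$ for $1\le i\le k$, and let $Q=\bigcup_{i=1}^kQ_i$. Let $A_1,\dots,A_r\subseteq\{1,\dots,k\}$ ($r\le k$) be pairwise disjoint, and let $G_j=\bigcup_{i\in A_j}W_i$ for $1\le j\le r$. Let $R$ be any subset of $Q\setminus\bigcup_{j=1}^rG_j$. For a given joint distribution of $X_1,\dots,X_n$, if $K_1=(C,\langle Q_i,1\le i\le k\rangle)$ is valid, then $K_2(R)=(C\cup R,\langle G_j,1\le j\le r\rangle)$ is valid.
   Context: $X_1,\dots,X_n$ are jointly distributed discrete random variables with $H(X_i)<\infty$; $X_\alpha=(X_i,i\in\alpha)$, $X_\emptyset$ is a constant. A CMI $(C,\langle Q_1,\dots,Q_k\rangle)$ (with $C\subseteq\{1,\dots,n\}$ and an unordered multiset of subsets $Q_i$) is valid for a given distribution if $\sum_{i=1}^kH(X_{Q_i}|X_C)-H(X_{Q_1},\dots,X_{Q_k}|X_C)=0$, i.e., $X_{Q_1},\dots,X_{Q_k}$ are mutually independent conditioning on $X_C$ (automatically true when $k\le1$). *)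

theory Defs
  imports "HOL-Probability.Probability"
begin

text \<open>A joint distribution of discrete random variables X_1,...,X_n is modelled by a
  discrete probability space (a pmf M on an outcome type 'w) together with
  random variables X i :: 'w \<Rightarrow> 'v.\<close>

definition varset :: "(nat \<Rightarrow> 'w \<Rightarrow> 'v) \<Rightarrow> nat set \<Rightarrow> 'w \<Rightarrow> (nat \<Rightarrow> 'v)" where
  "varset X \<alpha> \<omega> = (\<lambda>i. if i \<in> \<alpha> then X i \<omega> else undefined)"

definition finite_entropy :: "'w pmf \<Rightarrow> ('w \<Rightarrow> 'v) \<Rightarrow> bool" where
  "finite_entropy M Y \<longleftrightarrow>
     (\<lambda>v. pmf (map_pmf Y M) v * ln (pmf (map_pmf Y M) v)) summable_on UNIV"

definition cprob :: "'w pmf \<Rightarrow> 'w set \<Rightarrow> 'w set \<Rightarrow> real" where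
  "cprob M A B = measure_pmf.prob M (A \<inter> B) / measure_pmf.prob M B"

text \<open>A CMI (C, <Q_1,...,Q_k>) (the multiset of Q_i given as a list) is valid iff
  X_{Q_1},...,X_{Q_k} are mutually independent conditionally on X_C.\<close>
definition valid_cmi :: "'w pmf \<Rightarrow> (nat \<Rightarrow> 'w \<Rightarrow> 'v) \<Rightarrow> nat set \<Rightarrow> nat set list \<Rightarrow> bool" where
  "valid_cmi M X C Qs \<longleftrightarrow>
    (\<forall>c as. length as = length Qs \<longrightarrow>
       measure_pmf.prob M {\<omega>. varset X C \<omega> = c} > 0 \<longrightarrow>
       cprob M {\<omega>. \<forall>i<length Qs. varset X (Qs ! i) \<omega> = as ! i} {\<omega>. varset X C \<omega> = c}
       = (\<Prod>i<length Qs. cprob M {\<omega>. varset X (Qs ! i) \<omega> = as ! i} {\<omega>. varset X C \<omega> = c}))"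

end

theory Submission
  imports Defs
begin

text \<open>
  Conditioned on \<open>X\<^sub>C = c\<close>, the vectors \<open>X\<^sub>Q\<^sub>1, \<dots>, X\<^sub>Q\<^sub>k\<close> are independent, i.e. their joint
  law is a product and probabilities of rectangles factorise. Since \<open>R \<subseteq> Q\<close>, the event
  \<open>X\<^sub>R = c\<^sub>R\<close> is a rectangle in these vectors, and conditioning independent variables on a
  rectangle of positive probability keeps them independent. Finally each level set of
  \<open>X\<^sub>G\<^sub>j\<close> is a rectangle in the vectors \<open>X\<^sub>Q\<^sub>i\<close> with \<open>i \<in> A\<^sub>j\<close>; as the \<open>A\<^sub>j\<close> are disjoint,
  the product over \<open>i\<close> regroups into a product over \<open>j\<close>.
\<close>

lemma measure_cond_pmf_eq_cprob:
  assumes "measure_pmf.prob p S > 0"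
  shows "measure_pmf.prob (cond_pmf p S) A = cprob p A S"
proof -
  have "set_pmf p \<inter> S \<noteq> {}"
    using assms measure_pmf_zero_iff[of p S] by linarith
  then have "measure_pmf.prob (cond_pmf p S) A = measure (uniform_measure (measure_pmf p) S) A"
    by (simp add: cond_pmf.rep_eq)
  also have "\<dots> = measure_pmf.prob p (S \<inter> A) / measure_pmf.prob p S"
    using assms by (intro measure_uniform_measure) (simp_all add: measure_pmf.emeasure_eq_measure)
  finally show ?thesis
    by (simp add: cprob_def Int_commute)
qed

lemma cond_pmf_cond_pmf:
  assumes "measure_pmf.prob p (B \<inter> S) > 0"
  shows "cond_pmf (cond_pmf p S) B = cond_pmf p (B \<inter> S)"
proof -
  have S: "measure_pmf.prob p S > 0"
    using assms measure_pmf.finite_measure_mono[of "B \<inter> S" S p] by simp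
  have ne: "set_pmf p \<inter> (B \<inter> S) \<noteq> {}" "set_pmf p \<inter> S \<noteq> {}"
    using assms S measure_pmf_zero_iff by (metis less_irrefl)+
  then have "set_pmf (cond_pmf p S) \<inter> B \<noteq> {}"
    by auto
  moreover have "measure_pmf.prob (cond_pmf p S) B = measure_pmf.prob p (B \<inter> S) / measure_pmf.prob p S"
    using S by (simp add: measure_cond_pmf_eq_cprob cprob_def)
  ultimately show ?thesis
    using ne S by (intro pmf_eqI) (simp add: pmf_cond)
qed

definition pmf_indep_vars :: "'w pmf \<Rightarrow> ('i \<Rightarrow> 'w \<Rightarrow> 'b) \<Rightarrow> 'i set \<Rightarrow> bool" where
  "pmf_indep_vars P Y I \<longleftrightarrow>
     (\<forall>S. measure_pmf.prob P {\<omega>. \<forall>i\<in>I. Y i \<omega> \<in> S i} = (\<Prod>i\<in>I. measure_pmf.prob P {\<omega>. Y i \<omega> \<in> S i}))"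

lemma pmf_indep_vars_prob_subset:
  assumes "pmf_indep_vars P Y I" "finite I" "A \<subseteq> I"
  shows "measure_pmf.prob P {\<omega>. \<forall>i\<in>A. Y i \<omega> \<in> S i} = (\<Prod>i\<in>A. measure_pmf.prob P {\<omega>. Y i \<omega> \<in> S i})"
proof -
  define S' where "S' i = (if i \<in> A then S i else UNIV)" for i
  have "{\<omega>. \<forall>i\<in>A. Y i \<omega> \<in> S i} = {\<omega>. \<forall>i\<in>I. Y i \<omega> \<in> S' i}"
    using assms(3) by (auto simp: S'_def)
  then have "measure_pmf.prob P {\<omega>. \<forall>i\<in>A. Y i \<omega> \<in> S i} = (\<Prod>i\<in>I. measure_pmf.prob P {\<omega>. Y i \<omega> \<in> S' i})"
    using assms(1) by (simp add: pmf_indep_vars_def)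
  also have "\<dots> = (\<Prod>i\<in>I \<inter> A. measure_pmf.prob P {\<omega>. Y i \<omega> \<in> S i})"
    using assms(2) by (simp add: prod.inter_restrict S'_def) (intro prod.cong; simp)
  finally show ?thesis
    using assms(3) by (simp add: Int_absorb1)
qed

lemma pmf_indep_vars_iff_pmf_factors:
  fixes P :: "'w pmf" and Y :: "'i \<Rightarrow> 'w \<Rightarrow> 'b"
  assumes I: "finite I"
  shows "pmf_indep_vars P Y I \<longleftrightarrow>
    (\<forall>a. measure_pmf.prob P {\<omega>. \<forall>i\<in>I. Y i \<omega> = a i} = (\<Prod>i\<in>I. measure_pmf.prob P {\<omega>. Y i \<omega> = a i}))"
    (is "_ \<longleftrightarrow> (\<forall>a. ?factors a)")
proof
  assume indep: "pmf_indep_vars P Y I"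
  show "\<forall>a. ?factors a"
  proof
    fix a
    show "?factors a"
      using spec[OF indep[unfolded pmf_indep_vars_def], of "\<lambda>i. {a i}"] by simp
  qed
next
  assume factors: "\<forall>a. ?factors a"
  define d :: 'b where "d = undefined"
  define Y_I where "Y_I \<omega> i = (if i \<in> I then Y i \<omega> else d)" for \<omega> i
  have Y_I_eq: "Y_I -` {f} = {\<omega>. \<forall>i\<in>I. Y i \<omega> = f i}" if "\<forall>i. i \<notin> I \<longrightarrow> f i = d" for f
    using that by (auto simp: Y_I_def fun_eq_iff)
  have joint: "map_pmf Y_I P = Pi_pmf I d (\<lambda>i. map_pmf (Y i) P)"
  proof (rule pmf_eqI)
    fix f
    show "pmf (map_pmf Y_I P) f = pmf (Pi_pmf I d (\<lambda>i. map_pmf (Y i) P)) f"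
    proof (cases "\<forall>i. i \<notin> I \<longrightarrow> f i = d")
      case True
      have "pmf (map_pmf Y_I P) f = measure_pmf.prob P {\<omega>. \<forall>i\<in>I. Y i \<omega> = f i}"
        by (simp add: pmf_map Y_I_eq[OF True])
      also have "\<dots> = (\<Prod>i\<in>I. pmf (map_pmf (Y i) P) (f i))"
        using factors by (simp add: pmf_map vimage_def)
      finally show ?thesis
        using I True by (simp add: pmf_Pi)
    next
      case False
      then have "Y_I -` {f} = {}"
        by (auto simp: Y_I_def)
      with False I show ?thesis
        by (auto simp: pmf_map pmf_Pi)
    qed
  qed
  show "pmf_indep_vars P Y I"
    unfolding pmf_indep_vars_def
  proof
    fix S
    have "{\<omega>. \<forall>i\<in>I. Y i \<omega> \<in> S i} = Y_I -` PiE_dflt I d S"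
      by (auto simp: Y_I_def PiE_dflt_def)
    then have "measure_pmf.prob P {\<omega>. \<forall>i\<in>I. Y i \<omega> \<in> S i} = measure_pmf.prob (map_pmf Y_I P) (PiE_dflt I d S)"
      by simp
    also have "\<dots> = (\<Prod>i\<in>I. measure_pmf.prob (map_pmf (Y i) P) (S i))"
      unfolding joint using I by (rule measure_Pi_pmf_PiE_dflt)
    finally show "measure_pmf.prob P {\<omega>. \<forall>i\<in>I. Y i \<omega> \<in> S i} = (\<Prod>i\<in>I. measure_pmf.prob P {\<omega>. Y i \<omega> \<in> S i})"
      by (simp add: vimage_def)
  qed
qed

lemma pmf_indep_vars_cond_pmf:
  assumes indep: "pmf_indep_vars P Y I" and I: "finite I"
    and pos: "measure_pmf.prob P {\<omega>. \<forall>i\<in>I. Y i \<omega> \<in> T i} > 0"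
  shows "pmf_indep_vars (cond_pmf P {\<omega>. \<forall>i\<in>I. Y i \<omega> \<in> T i}) Y I"
proof -
  define B where "B = {\<omega>. \<forall>i\<in>I. Y i \<omega> \<in> T i}"
  define t where "t i = measure_pmf.prob P {\<omega>. Y i \<omega> \<in> T i}" for i
  define q where "q S i = measure_pmf.prob P {\<omega>. Y i \<omega> \<in> S i \<inter> T i} / t i" for S i
  have PB: "measure_pmf.prob P B = (\<Prod>i\<in>I. t i)"
    using indep by (simp add: pmf_indep_vars_def B_def t_def)
  have cond: "measure_pmf.prob (cond_pmf P B) E = measure_pmf.prob P (E \<inter> B) / measure_pmf.prob P B" for E
    using pos by (simp add: measure_cond_pmf_eq_cprob cprob_def B_def)
  have "(\<Prod>i\<in>I. t i) \<noteq> 0"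
    using pos PB by (simp add: B_def)
  then have t_nz: "t i \<noteq> 0" if "i \<in> I" for i
    using that I by (auto simp: prod_zero_iff)
  have cond_rect: "measure_pmf.prob (cond_pmf P B) {\<omega>. \<forall>i\<in>A. Y i \<omega> \<in> S i} = (\<Prod>i\<in>A. q S i)"
    if "A \<subseteq> I" for A S
  proof -
    define S' where "S' i = (if i \<in> A then S i \<inter> T i else T i)" for i
    have "{\<omega>. \<forall>i\<in>A. Y i \<omega> \<in> S i} \<inter> B = {\<omega>. \<forall>i\<in>I. Y i \<omega> \<in> S' i}"
      using that by (auto simp: B_def S'_def)
    then have "measure_pmf.prob (cond_pmf P B) {\<omega>. \<forall>i\<in>A. Y i \<omega> \<in> S i}
        = (\<Prod>i\<in>I. measure_pmf.prob P {\<omega>. Y i \<omega> \<in> S' i}) / (\<Prod>i\<in>I. t i)"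
      using indep by (simp add: cond pmf_indep_vars_def PB)
    also have "\<dots> = (\<Prod>i\<in>I. if i \<in> A then q S i else 1)"
      unfolding prod_dividef[symmetric] using t_nz
      by (intro prod.cong) (auto simp: S'_def q_def t_def)
    also have "\<dots> = (\<Prod>i\<in>A. q S i)"
      using I that by (simp add: prod.inter_restrict[symmetric] Int_absorb1)
    finally show ?thesis .
  qed
  show ?thesis
    unfolding pmf_indep_vars_def B_def[symmetric]
  proof
    fix S
    have "measure_pmf.prob (cond_pmf P B) {\<omega>. Y i \<omega> \<in> S i} = q S i" if "i \<in> I" for i
      using cond_rect[of "{i}" S] that by simp
    then show "measure_pmf.prob (cond_pmf P B) {\<omega>. \<forall>i\<in>I. Y i \<omega> \<in> S i}
        = (\<Prod>i\<in>I. measure_pmf.prob (cond_pmf P B) {\<omega>. Y i \<omega> \<in> S i})"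
      using cond_rect[of I S] by simp
  qed
qed

lemma pmf_indep_vars_prob_groups:
  assumes indep: "pmf_indep_vars P Y I" and I: "finite I" and J: "finite J"
    and disj: "disjoint_family_on A J" and A: "\<And>j. j \<in> J \<Longrightarrow> A j \<subseteq> I"
  shows "measure_pmf.prob P {\<omega>. \<forall>j\<in>J. \<forall>i\<in>A j. Y i \<omega> \<in> U j i}
    = (\<Prod>j\<in>J. measure_pmf.prob P {\<omega>. \<forall>i\<in>A j. Y i \<omega> \<in> U j i})"
proof -
  define V where "V i = (\<Inter>j\<in>{j\<in>J. i \<in> A j}. U j i)" for i
  have V: "V i = U j i" if "j \<in> J" "i \<in> A j" for i j
  proof -
    have "{j'\<in>J. i \<in> A j'} = {j}"
      using that disj by (auto simp: disjoint_family_on_def)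
    then show ?thesis
      by (simp add: V_def)
  qed
  have "{\<omega>. \<forall>j\<in>J. \<forall>i\<in>A j. Y i \<omega> \<in> U j i} = {\<omega>. \<forall>i\<in>(\<Union>j\<in>J. A j). Y i \<omega> \<in> V i}"
    using V by auto
  also have "measure_pmf.prob P \<dots> = (\<Prod>i\<in>(\<Union>j\<in>J. A j). measure_pmf.prob P {\<omega>. Y i \<omega> \<in> V i})"
    using indep I A by (intro pmf_indep_vars_prob_subset) auto
  also have "\<dots> = (\<Prod>j\<in>J. \<Prod>i\<in>A j. measure_pmf.prob P {\<omega>. Y i \<omega> \<in> V i})"
    using J I A disj by (intro prod.UNION_disjoint) (auto simp: disjoint_family_on_def intro: finite_subset)
  also have "\<dots> = (\<Prod>j\<in>J. measure_pmf.prob P {\<omega>. \<forall>i\<in>A j. Y i \<omega> \<in> U j i})"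
    using indep I A V by (intro prod.cong refl) (simp add: pmf_indep_vars_prob_subset)
  finally show ?thesis .
qed

lemma varset_eq_iff:
  "varset X S \<omega> = g \<longleftrightarrow> (\<forall>v. v \<notin> S \<longrightarrow> g v = undefined) \<and> (\<forall>v\<in>S. X v \<omega> = g v)"
  unfolding varset_def fun_eq_iff by auto

lemma valid_cmi_iff_pmf_indep_vars:
  "valid_cmi M X C (map Q [1..<k+1]) \<longleftrightarrow>
    (\<forall>c. measure_pmf.prob M {\<omega>. varset X C \<omega> = c} > 0 \<longrightarrow>
      pmf_indep_vars (cond_pmf M {\<omega>. varset X C \<omega> = c}) (\<lambda>i. varset X (Q i)) {1..k})"
proof -
  let ?Y = "\<lambda>i. varset X (Q i)" and ?Qs = "map (\<lambda>i. Q (Suc i)) [0..<k]"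
  have Qs: "map Q [1..<k+1] = ?Qs"
    by (simp flip: map_Suc_upt del: upt_Suc)
  have shift: "(\<forall>i<k. P (Suc i)) \<longleftrightarrow> (\<forall>i\<in>{1..k}. P i)" for P
    unfolding image_Suc_lessThan[symmetric] by auto
  have prod_shift: "(\<Prod>i<k. f (Suc i)) = (\<Prod>i\<in>{1..k}. f i)" for f :: "nat \<Rightarrow> real"
    using prod.atLeast1_atMost_eq[of f k] by simp
  have "(\<forall>as. length as = length ?Qs \<longrightarrow>
         cprob M {\<omega>. \<forall>i<length ?Qs. varset X (?Qs ! i) \<omega> = as ! i} B
         = (\<Prod>i<length ?Qs. cprob M {\<omega>. varset X (?Qs ! i) \<omega> = as ! i} B))
      \<longleftrightarrow> pmf_indep_vars (cond_pmf M B) ?Y {1..k}"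
    (is "(\<forall>as. _ \<longrightarrow> ?list_factors as) \<longleftrightarrow> _")
    if pos: "measure_pmf.prob M B > 0" for B
  proof -
    define factors where "factors b \<longleftrightarrow>
      measure_pmf.prob (cond_pmf M B) {\<omega>. \<forall>i\<in>{1..k}. ?Y i \<omega> = b i}
        = (\<Prod>i\<in>{1..k}. measure_pmf.prob (cond_pmf M B) {\<omega>. ?Y i \<omega> = b i})" for b
    have list_factors_iff: "?list_factors as \<longleftrightarrow> factors b"
      if "length as = k" "\<And>i. i < k \<Longrightarrow> as ! i = b (Suc i)" for as b
    proof -
      have "?list_factors as \<longleftrightarrow> cprob M {\<omega>. \<forall>i<k. ?Y (Suc i) \<omega> = b (Suc i)} B
          = (\<Prod>i<k. cprob M {\<omega>. ?Y (Suc i) \<omega> = b (Suc i)} B)"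
        using that by simp
      also have "\<dots> \<longleftrightarrow> factors b"
        unfolding factors_def measure_cond_pmf_eq_cprob[OF pos] shift[symmetric] prod_shift[symmetric] ..
      finally show ?thesis .
    qed
    show ?thesis
      unfolding pmf_indep_vars_iff_pmf_factors[OF finite_atLeastAtMost] factors_def[symmetric]
    proof (intro iffI allI impI)
      fix a
      assume "\<forall>as. length as = length ?Qs \<longrightarrow> ?list_factors as"
      then have "?list_factors (map (\<lambda>i. a (Suc i)) [0..<k])"
        by (auto dest: spec[of _ "map (\<lambda>i. a (Suc i)) [0..<k]"])
      then show "factors a"
        using list_factors_iff[of "map (\<lambda>i. a (Suc i)) [0..<k]" a] by simp
    next
      fix as :: "(nat \<Rightarrow> 'b) list"
      assume "\<forall>a. factors a" and "length as = length ?Qs"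
      then show "?list_factors as"
        using list_factors_iff[of as "\<lambda>i. as ! (i - 1)"] by auto
    qed
  qed
  then show ?thesis
    unfolding valid_cmi_def Qs by blast
qed

lemma pmf_indep_vars_varset_cond_pmf:
  assumes indep: "pmf_indep_vars P (\<lambda>i. varset X (Q i)) I" and I: "finite I"
    and R: "R \<subseteq> (\<Union>i\<in>I. Q i)"
    and pos: "measure_pmf.prob P {\<omega>. \<forall>v\<in>R. X v \<omega> = b v} > 0"
  shows "pmf_indep_vars (cond_pmf P {\<omega>. \<forall>v\<in>R. X v \<omega> = b v}) (\<lambda>i. varset X (Q i)) I"
proof -
  define T where "T i = {y. \<forall>v\<in>R \<inter> Q i. y v = b v}" for i
  have "{\<omega>. \<forall>v\<in>R. X v \<omega> = b v} = {\<omega>. \<forall>i\<in>I. varset X (Q i) \<omega> \<in> T i}"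
    using R by (auto simp: T_def varset_def)
  then show ?thesis
    using pmf_indep_vars_cond_pmf[OF indep I] pos by simp
qed

lemma pmf_indep_vars_varset_Union:
  assumes indep: "pmf_indep_vars P (\<lambda>i. varset X (Q i)) I" and I: "finite I" and J: "finite J"
    and disj: "disjoint_family_on A J" and A: "\<And>j. j \<in> J \<Longrightarrow> A j \<subseteq> I"
    and W: "\<And>i. i \<in> I \<Longrightarrow> W i \<subseteq> Q i"
  shows "pmf_indep_vars P (\<lambda>j. varset X (\<Union>i\<in>A j. W i)) J"
proof -
  let ?G = "\<lambda>j. \<Union>i\<in>A j. W i"
  have "measure_pmf.prob P {\<omega>. \<forall>j\<in>J. varset X (?G j) \<omega> = g j}
      = (\<Prod>j\<in>J. measure_pmf.prob P {\<omega>. varset X (?G j) \<omega> = g j})" for g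
  proof (cases "\<forall>j\<in>J. \<forall>v. v \<notin> ?G j \<longrightarrow> g j v = undefined")
    case True
    define U where "U j i = {y. \<forall>v\<in>W i. y v = g j v}" for j i
    have event: "{\<omega>. varset X (?G j) \<omega> = g j} = {\<omega>. \<forall>i\<in>A j. varset X (Q i) \<omega> \<in> U j i}"
      if j: "j \<in> J" for j
    proof -
      have "varset X (Q i) \<omega> \<in> U j i \<longleftrightarrow> (\<forall>v\<in>W i. X v \<omega> = g j v)" if "i \<in> A j" for i \<omega>
        using W[of i] A[OF j] that by (auto simp: U_def varset_def)
      moreover have "varset X (?G j) \<omega> = g j \<longleftrightarrow> (\<forall>i\<in>A j. \<forall>v\<in>W i. X v \<omega> = g j v)" for \<omega>
        using True j by (auto simp: varset_eq_iff)
      ultimately show ?thesis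
        by auto
    qed
    then have "{\<omega>. \<forall>j\<in>J. varset X (?G j) \<omega> = g j} = {\<omega>. \<forall>j\<in>J. \<forall>i\<in>A j. varset X (Q i) \<omega> \<in> U j i}"
      by blast
    then show ?thesis
      using pmf_indep_vars_prob_groups[OF indep I J disj A] event by simp
  next
    case False
    then obtain j where j: "j \<in> J" and empty: "{\<omega>. varset X (?G j) \<omega> = g j} = {}"
      by (auto simp: varset_eq_iff)
    then have "{\<omega>. \<forall>j\<in>J. varset X (?G j) \<omega> = g j} = {}"
      by blast
    moreover have "(\<Prod>j\<in>J. measure_pmf.prob P {\<omega>. varset X (?G j) \<omega> = g j}) = 0"
      using j empty by (intro prod_zero J bexI[of _ j]) simp_all
    ultimately show ?thesis
      by (simp only: measure_empty)
  qed
  then show ?thesis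
    using pmf_indep_vars_iff_pmf_factors[OF J] by blast
qed

theorem mainTheorem12:
  fixes M :: "'w pmf" and X :: "nat \<Rightarrow> 'w \<Rightarrow> 'v"
    and n k r :: nat and C R :: "nat set"
    and Q W :: "nat \<Rightarrow> nat set" and A :: "nat \<Rightarrow> nat set"
  assumes fin: "\<And>i. i \<in> {1..n} \<Longrightarrow> finite_entropy M (X i)"
    and C: "C \<subseteq> {1..n}"
    and Q: "\<And>i. i \<in> {1..k} \<Longrightarrow> Q i \<subseteq> {1..n}"
    and W: "\<And>i. i \<in> {1..k} \<Longrightarrow> W i \<subseteq> Q i"
    and rk: "r \<le> k"
    and A: "\<And>j. j \<in> {1..r} \<Longrightarrow> A j \<subseteq> {1..k}"
    and disj: "\<And>j j'. j \<in> {1..r} \<Longrightarrow> j' \<in> {1..r} \<Longrightarrow> j \<noteq> j' \<Longrightarrow> A j \<inter> A j' = {}"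
    and R: "R \<subseteq> (\<Union>i\<in>{1..k}. Q i) - (\<Union>j\<in>{1..r}. \<Union>i\<in>A j. W i)"
    and K1: "valid_cmi M X C (map Q [1..<k+1])"
  shows "valid_cmi M X (C \<union> R) (map (\<lambda>j. \<Union>i\<in>A j. W i) [1..<r+1])"
  unfolding valid_cmi_iff_pmf_indep_vars
proof (intro allI impI)
  fix c
  let ?B = "{\<omega>. varset X (C \<union> R) \<omega> = c}"
  assume pos: "measure_pmf.prob M ?B > 0"
  then obtain \<omega>\<^sub>0 where "\<omega>\<^sub>0 \<in> ?B"
    by (metis equals0I measure_empty less_irrefl)
  then have c: "c = varset X (C \<union> R) \<omega>\<^sub>0"
    by simp
  define B\<^sub>C where "B\<^sub>C = {\<omega>. varset X C \<omega> = varset X C \<omega>\<^sub>0}"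
  define B\<^sub>R where "B\<^sub>R = {\<omega>. \<forall>v\<in>R. X v \<omega> = X v \<omega>\<^sub>0}"
  have B: "?B = B\<^sub>R \<inter> B\<^sub>C"
    unfolding c B\<^sub>R_def B\<^sub>C_def by (auto simp: varset_def fun_eq_iff)
  have pos_C: "measure_pmf.prob M B\<^sub>C > 0"
    using pos measure_pmf.finite_measure_mono[of ?B B\<^sub>C M] B by auto
  have pos_R: "measure_pmf.prob (cond_pmf M B\<^sub>C) B\<^sub>R > 0"
    using pos pos_C B by (simp add: measure_cond_pmf_eq_cprob cprob_def)
  have "pmf_indep_vars (cond_pmf M B\<^sub>C) (\<lambda>i. varset X (Q i)) {1..k}"
    using K1 pos_C unfolding valid_cmi_iff_pmf_indep_vars B\<^sub>C_def by blast
  then have "pmf_indep_vars (cond_pmf (cond_pmf M B\<^sub>C) B\<^sub>R) (\<lambda>i. varset X (Q i)) {1..k}"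
    using R pos_R unfolding B\<^sub>R_def by (intro pmf_indep_vars_varset_cond_pmf) auto
  then have indep: "pmf_indep_vars (cond_pmf M ?B) (\<lambda>i. varset X (Q i)) {1..k}"
    using pos by (simp add: B cond_pmf_cond_pmf)
  have "disjoint_family_on A {1..r}"
    using disj unfolding disjoint_family_on_def by blast
  then show "pmf_indep_vars (cond_pmf M ?B) (\<lambda>j. varset X (\<Union>i\<in>A j. W i)) {1..r}"
    by (rule pmf_indep_vars_varset_Union[OF indep finite_atLeastAtMost finite_atLeastAtMost _ A W])
qed

end
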